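(* Let $R$ be a commutative ring with identity, let $(S,\leq)$ be a strictly ordered monoid, and let $w\in S$. Let $P_w:[[R^{S,\leq}]]\to[[R^{S,\leq}]]$ be the cut-off operator at $w$, given by $P_w(f)(s)=f(s)$ if $s<w$ and $P_w(f)(s)=0$ if $s\not<w$. Set $$A_w=\{(u,v)\in S\times S: u\not<w,\ v\not<w,\ u+v<w\},\qquad B_w=\{(u,v)\in S\times S: u<w,\ v<w,\ u+v\not<w\}.$$ Then $([[R^{S,\leq}]],P_w)$ is a Rota-Baxter algebra (of weight $-1$) if and only if $A_w=\emptyset$ and $B_w=\emptyset$.
   Context: All monoids are commutative and written additively with neutral element $0$. A partially ordered set is artinian if every strictly decreasing sequence is finite, and narrow if every subset of pairwise incomparable elements is finite. A strictly ordered monoid is a commutative monoid $S$ with a partial order $\leq$ such that $s<s'$ implies $s+t<s'+t$ for all $s,s',t\in S$. The ring of generalized power series $[[R^{S,\leq}]]$ is the set of maps $f:S\to R$ with artinian and narrow support $\{s: f(s)\neq 0\}$, with pointwise addition and convolution $(fg)(s)=\sum f(u)g(v)$ over the finitely many pairs $(u,v)$ with $u+v=s$, $f(u)\neq0$, $g(v)\neq0$. A Rota-Baxter algebra (of weight $-1$) is an associative $R$-algebra $A$ with an $R$-linear $P:A\to A$ satisfying $P(x)P(y)=P(xP(y))+P(P(x)y)-P(xy)$ for all $x,y\in A$. *)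

theory Defs
  imports Main
begin

definition strictly_ordered_monoid :: "'a::{comm_monoid_add, order} itself \<Rightarrow> bool" where
  "strictly_ordered_monoid _ \<longleftrightarrow> (\<forall>s s' t :: 'a. s < s' \<longrightarrow> s + t < s' + t)"

definition artinian :: "'a::order set \<Rightarrow> bool" where
  "artinian A \<longleftrightarrow> \<not> (\<exists>x :: nat \<Rightarrow> 'a. \<forall>n. x n \<in> A \<and> x (Suc n) < x n)"

definition narrow :: "'a::order set \<Rightarrow> bool" where
  "narrow A \<longleftrightarrow> (\<forall>B \<subseteq> A. (\<forall>x\<in>B. \<forall>y\<in>B. x \<noteq> y \<longrightarrow> \<not> x \<le> y \<and> \<not> y \<le> x) \<longrightarrow> finite B)"

definition supp :: "('a \<Rightarrow> 'r::zero) \<Rightarrow> 'a set" where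
  "supp f = {s. f s \<noteq> 0}"

text \<open>The carrier of the ring of generalized power series [[R^{S,<=}]].\<close>
definition gps :: "('a::order \<Rightarrow> 'r::zero) set" where
  "gps = {f. artinian (supp f) \<and> narrow (supp f)}"

definition conv :: "('a::comm_monoid_add \<Rightarrow> 'r::comm_ring_1) \<Rightarrow> ('a \<Rightarrow> 'r) \<Rightarrow> 'a \<Rightarrow> 'r" where
  "conv f g s = (\<Sum>(u, v) \<in> {(u, v). u + v = s \<and> f u \<noteq> 0 \<and> g v \<noteq> 0}. f u * g v)"

definition cutoff :: "'a::order \<Rightarrow> ('a \<Rightarrow> 'r::zero) \<Rightarrow> 'a \<Rightarrow> 'r" where
  "cutoff w f = (\<lambda>s. if s < w then f s else 0)"

definition rota_baxter_gps ::
  "(('a::{comm_monoid_add, order} \<Rightarrow> 'r::comm_ring_1) \<Rightarrow> ('a \<Rightarrow> 'r)) \<Rightarrow> bool" where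
  "rota_baxter_gps P \<longleftrightarrow>
     (\<forall>f \<in> gps. P f \<in> gps) \<and>
     (\<forall>f \<in> gps. \<forall>g \<in> gps. P (\<lambda>s. f s + g s) = (\<lambda>s. P f s + P g s)) \<and>
     (\<forall>c. \<forall>f \<in> gps. P (\<lambda>s. c * f s) = (\<lambda>s. c * P f s)) \<and>
     (\<forall>f \<in> gps. \<forall>g \<in> gps.
        conv (P f) (P g) =
        (\<lambda>s. P (conv f (P g)) s + P (conv (P f) g) s - P (conv f g) s))"

definition A_set :: "'a::{comm_monoid_add, order} \<Rightarrow> ('a \<times> 'a) set" where
  "A_set w = {(u, v). \<not> u < w \<and> \<not> v < w \<and> u + v < w}"

definition B_set :: "'a::{comm_monoid_add, order} \<Rightarrow> ('a \<times> 'a) set" where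
  "B_set w = {(u, v). u < w \<and> v < w \<and> \<not> u + v < w}"

end

theory Submission
  imports Defs "HOL-Library.Ramsey"
begin

text \<open>At degree s, the product P f * P g collects the terms f u * g v with u + v = s and
  both u < w and v < w, whereas P (f * P g) + P (P f * g) - P (f * g) collects, when s < w,
  the terms with u < w or v < w (by inclusion-exclusion) and nothing otherwise. The two
  agree for all f and g exactly when no pair has u, v not below w but u + v < w (A_w) and no
  pair has u, v < w but u + v not below w (B_w); monomials at u and v witness any failure.
  Inclusion-exclusion needs the convolution sums to be finite: by Ramsey's theorem, every
  sequence in an artinian narrow set has a weakly increasing subsequence, and by strict
  monotonicity of addition two distinct such pairs cannot have the same sum.\<close>

lemma artinian_subset: "A \<subseteq> B \<Longrightarrow> artinian B \<Longrightarrow> artinian A"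
  unfolding artinian_def by blast

lemma narrow_subset: "A \<subseteq> B \<Longrightarrow> narrow B \<Longrightarrow> narrow A"
  unfolding narrow_def by (meson subset_trans)

lemma finite_imp_artinian:
  assumes "finite A" shows "artinian A"
  unfolding artinian_def
proof (rule notI, elim exE)
  fix x :: "nat \<Rightarrow> 'a" assume x: "\<forall>n. x n \<in> A \<and> x (Suc n) < x n"
  have descending: "x n' < x n" if "n < n'" for n n'
    using that by (induct n n' rule: less_Suc_induct) (use x in \<open>auto intro: order.strict_trans\<close>)
  have "inj x"
    by (rule injI) (metis descending less_irrefl nat_neq_iff)
  moreover have "range x \<subseteq> A" using x by blast
  ultimately show False
    using assms range_inj_infinite finite_subset by blast
qed

lemma finite_imp_narrow: "finite A \<Longrightarrow> narrow A"
  unfolding narrow_def by (meson finite_subset)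

lemma finite_supp_in_gps: "finite (supp f) \<Longrightarrow> f \<in> gps"
  by (simp add: gps_def finite_imp_artinian finite_imp_narrow)

lemma artinian_no_descending_on_infinite:
  fixes x :: "nat \<Rightarrow> 'a::order"
  assumes "artinian A" "infinite H" "x ` H \<subseteq> A"
    and descending: "\<And>i j. i \<in> H \<Longrightarrow> j \<in> H \<Longrightarrow> i < j \<Longrightarrow> x j < x i"
  shows False
proof -
  define y where "y n = x (enumerate H n)" for n
  have "y n \<in> A \<and> y (Suc n) < y n" for n
  proof -
    have "enumerate H n \<in> H" "enumerate H (Suc n) \<in> H"
      using assms(2) by (simp_all add: enumerate_in_set)
    moreover have "enumerate H n < enumerate H (Suc n)"
      using assms(2) by (rule enumerate_step)
    ultimately show ?thesis
      using assms(3) descending unfolding y_def by blast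
  qed
  then show False using assms(1) unfolding artinian_def by blast
qed

lemma narrow_no_antichain_on_infinite:
  fixes x :: "nat \<Rightarrow> 'a::order"
  assumes "narrow A" "infinite H" "x ` H \<subseteq> A"
    and incomparable: "\<And>i j. i \<in> H \<Longrightarrow> j \<in> H \<Longrightarrow> i < j \<Longrightarrow> \<not> x i \<le> x j \<and> \<not> x j \<le> x i"
  shows False
proof -
  have distinct_incomparable: "\<not> x i \<le> x j" if "i \<in> H" "j \<in> H" "i \<noteq> j" for i j
    using that incomparable by (cases "i < j") (auto simp: nat_neq_iff)
  have "inj_on x H"
    by (rule inj_onI) (metis distinct_incomparable order_refl)
  moreover have "finite (x ` H)"
  proof -
    have "\<forall>p\<in>x ` H. \<forall>q\<in>x ` H. p \<noteq> q \<longrightarrow> \<not> p \<le> q \<and> \<not> q \<le> p"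
      using distinct_incomparable by fast
    then show ?thesis
      using assms(1,3) unfolding narrow_def by blast
  qed
  ultimately show False
    using assms(2) finite_imageD by blast
qed

lemma artinian_narrow_increasing_subseq:
  fixes x :: "nat \<Rightarrow> 'a::order"
  assumes art: "artinian A" and nar: "narrow A" and N: "infinite N" and x: "x ` N \<subseteq> A"
  obtains H where "H \<subseteq> N" "infinite H" "\<And>i j. i \<in> H \<Longrightarrow> j \<in> H \<Longrightarrow> i < j \<Longrightarrow> x i \<le> x j"
proof -
  define colour :: "nat set \<Rightarrow> nat" where
    "colour X = (if x (Min X) \<le> x (Max X) then 0 else if x (Max X) < x (Min X) then 1 else 2)" for X
  have three_colours: "\<forall>i\<in>N. \<forall>j\<in>N. i \<noteq> j \<longrightarrow> colour {i, j} < 3"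
    by (simp add: colour_def)
  then obtain H t where H: "H \<subseteq> N" "infinite H" "t < 3"
    and monochromatic: "\<forall>i\<in>H. \<forall>j\<in>H. i \<noteq> j \<longrightarrow> colour {i, j} = t"
    using Ramsey2[OF N three_colours] by meson
  have Ht: "(if x i \<le> x j then 0 else if x j < x i then 1 else 2) = t"
    if "i \<in> H" "j \<in> H" "i < j" for i j
  proof -
    have "colour {i, j} = t"
      using monochromatic that(1,2) less_imp_neq[OF that(3)] by blast
    moreover have "colour {i, j} = (if x i \<le> x j then 0 else if x j < x i then 1 else 2)"
      using \<open>i < j\<close> by (simp add: colour_def min_def max_def)
    ultimately show ?thesis by simp
  qed
  have xH: "x ` H \<subseteq> A" using H(1) x by blast
  consider "t = 0" | "t = 1" | "t = 2" using H(3) by linarith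
  then show thesis
  proof cases
    case 1
    then have "x i \<le> x j" if "i \<in> H" "j \<in> H" "i < j" for i j
      using Ht[OF that] by (cases "x i \<le> x j"; cases "x j < x i") (auto simp: order_le_less)
    then show thesis by (rule that[OF H(1,2)])
  next
    case 2
    then have "x j < x i" if "i \<in> H" "j \<in> H" "i < j" for i j
      using Ht[OF that] by (cases "x i \<le> x j"; cases "x j < x i") (auto simp: order_le_less)
    then show thesis by (rule artinian_no_descending_on_infinite[OF art H(2) xH, THEN FalseE])
  next
    case 3
    then have "\<not> x i \<le> x j \<and> \<not> x j \<le> x i" if "i \<in> H" "j \<in> H" "i < j" for i j
      using Ht[OF that] by (cases "x i \<le> x j"; cases "x j < x i") (auto simp: order_le_less)
    then show thesis by (rule narrow_no_antichain_on_infinite[OF nar H(2) xH, THEN FalseE])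
  qed
qed

lemma strictly_ordered_monoid_add_less_add:
  fixes a a' b b' :: "'a::{comm_monoid_add, order}"
  assumes "strictly_ordered_monoid TYPE('a)"
    and "a \<le> a'" "b \<le> b'" "(a, b) \<noteq> (a', b')"
  shows "a + b < a' + b'"
proof -
  have strict_right: "s + t < s' + t" if "s < s'" for s s' t :: 'a
    using assms(1) that unfolding strictly_ordered_monoid_def by blast
  have strict_left: "t + s < t + s'" if "s < s'" for s s' t :: 'a
    using strict_right[OF that, of t] by (simp add: add.commute)
  show ?thesis
  proof (cases "a = a'")
    case True
    then have "b < b'" using assms(3,4) by simp
    then show ?thesis using True strict_left by simp
  next
    case False
    then have "a + b < a' + b" using assms(2) strict_right by simp
    also have "\<dots> \<le> a' + b'"
      using assms(3) strict_left[of b b' a'] by (auto simp: order_le_less)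
    finally show ?thesis .
  qed
qed

definition conv_pairs :: "('a::comm_monoid_add \<Rightarrow> 'r::zero) \<Rightarrow> ('a \<Rightarrow> 'r) \<Rightarrow> 'a \<Rightarrow> ('a \<times> 'a) set" where
  "conv_pairs f g s = {(u, v). u + v = s \<and> f u \<noteq> 0 \<and> g v \<noteq> 0}"

lemma conv_eq_sum_conv_pairs: "conv f g s = (\<Sum>(u, v) \<in> conv_pairs f g s. f u * g v)"
  by (simp add: conv_def conv_pairs_def)

lemma finite_conv_pairs:
  fixes f g :: "'a::{comm_monoid_add, order} \<Rightarrow> 'r::zero"
  assumes so: "strictly_ordered_monoid TYPE('a)" and "f \<in> gps" "g \<in> gps"
  shows "finite (conv_pairs f g s)"
proof (rule ccontr)
  assume "infinite (conv_pairs f g s)"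
  then obtain p :: "nat \<Rightarrow> 'a \<times> 'a" where p: "inj p" "range p \<subseteq> conv_pairs f g s"
    using infinite_countable_subset by meson
  have p_in: "p n \<in> conv_pairs f g s" for n
    using p(2) by blast
  have p_sum: "fst (p n) + snd (p n) = s"
    and p_supp: "fst (p n) \<in> supp f" "snd (p n) \<in> supp g" for n
    using p_in[of n] by (cases "p n"; simp add: conv_pairs_def supp_def)+
  have fst_range: "(fst \<circ> p) ` UNIV \<subseteq> supp f" and snd_range: "(snd \<circ> p) ` H \<subseteq> supp g" for H
    using p_supp by auto
  have f_supp: "artinian (supp f)" "narrow (supp f)" and g_supp: "artinian (supp g)" "narrow (supp g)"
    using assms(2,3) by (simp_all add: gps_def)
  obtain H1 where H1: "infinite H1"
    and fst_mono: "\<And>i j. i \<in> H1 \<Longrightarrow> j \<in> H1 \<Longrightarrow> i < j \<Longrightarrow> (fst \<circ> p) i \<le> (fst \<circ> p) j"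
    using artinian_narrow_increasing_subseq[OF f_supp infinite_UNIV_nat fst_range] by metis
  obtain H where H: "H \<subseteq> H1" "infinite H"
    and snd_mono: "\<And>i j. i \<in> H \<Longrightarrow> j \<in> H \<Longrightarrow> i < j \<Longrightarrow> (snd \<circ> p) i \<le> (snd \<circ> p) j"
    using artinian_narrow_increasing_subseq[OF g_supp H1 snd_range] by metis
  obtain i where "i \<in> H"
    using infinite_imp_nonempty[OF H(2)] by blast
  moreover obtain j where "j \<in> H" "i < j"
    using H(2) infinite_nat_iff_unbounded by blast
  moreover have "p i \<noteq> p j" using p(1) \<open>i < j\<close> by (simp add: inj_eq)
  ultimately have "fst (p i) + snd (p i) < fst (p j) + snd (p j)"
    using strictly_ordered_monoid_add_less_add[OF so] fst_mono snd_mono H(1)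
    by (simp add: prod_eq_iff subset_iff)
  then show False using p_sum by simp
qed

lemma conv_restrict:
  fixes f g :: "'a::comm_monoid_add \<Rightarrow> 'r::comm_ring_1"
  shows "conv (\<lambda>u. if Q u then f u else 0) (\<lambda>v. if R v then g v else 0) s
     = (\<Sum>(u, v) \<in> {(u, v) \<in> conv_pairs f g s. Q u \<and> R v}. f u * g v)"
  unfolding conv_eq_sum_conv_pairs
  by (rule sum.cong) (auto simp: conv_pairs_def split: if_splits)

lemma cutoff_in_gps:
  assumes "f \<in> gps" shows "cutoff w f \<in> gps"
proof -
  have supp_cutoff: "supp (cutoff w f) \<subseteq> supp f"
    by (auto simp: supp_def cutoff_def)
  show ?thesis
    using assms artinian_subset[OF supp_cutoff] narrow_subset[OF supp_cutoff] by (simp add: gps_def)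
qed

lemma cutoff_rota_baxter_identity:
  fixes f g :: "'a::{comm_monoid_add, order} \<Rightarrow> 'r::comm_ring_1"
  assumes so: "strictly_ordered_monoid TYPE('a)" and f: "f \<in> gps" and g: "g \<in> gps"
    and A: "A_set w = {}" and B: "B_set w = {}"
  shows "conv (cutoff w f) (cutoff w g) s =
    cutoff w (conv f (cutoff w g)) s + cutoff w (conv (cutoff w f) g) s - cutoff w (conv f g) s"
proof -
  let ?h = "\<lambda>(u, v). f u * g v"
  let ?T = "conv_pairs f g s"
  let ?T\<^sub>l = "{(u, v) \<in> ?T. u < w}" and ?T\<^sub>r = "{(u, v) \<in> ?T. v < w}"
  have both: "conv (cutoff w f) (cutoff w g) s = sum ?h (?T\<^sub>l \<inter> ?T\<^sub>r)"
    unfolding cutoff_def conv_restrict by (rule sum.cong) auto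
  have left: "conv (cutoff w f) g s = sum ?h ?T\<^sub>l"
    using conv_restrict[of "\<lambda>u. u < w" f "\<lambda>_. True" g s] by (simp add: cutoff_def)
  have right: "conv f (cutoff w g) s = sum ?h ?T\<^sub>r"
    using conv_restrict[of "\<lambda>_. True" f "\<lambda>v. v < w" g s] by (simp add: cutoff_def)
  show ?thesis
  proof (cases "s < w")
    case True
    have "u < w \<or> v < w" if "u + v = s" for u v
      using A True that unfolding A_set_def by blast
    then have union: "?T\<^sub>l \<union> ?T\<^sub>r = ?T"
      by (auto simp: conv_pairs_def)
    have finite: "finite ?T"
      by (rule finite_conv_pairs[OF so f g])
    have "sum ?h (?T\<^sub>l \<union> ?T\<^sub>r) + sum ?h (?T\<^sub>l \<inter> ?T\<^sub>r) = sum ?h ?T\<^sub>l + sum ?h ?T\<^sub>r"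
      by (rule sum.union_inter; rule finite_subset[OF _ finite]) auto
    then show ?thesis
      using True both left right union
      by (simp add: cutoff_def conv_eq_sum_conv_pairs algebra_simps)
  next
    case False
    have "\<not> (u < w \<and> v < w)" if "u + v = s" for u v
      using B False that unfolding B_set_def by blast
    then have "?T\<^sub>l \<inter> ?T\<^sub>r = {}"
      by (auto simp: conv_pairs_def)
    then show ?thesis
      using False both by (simp add: cutoff_def)
  qed
qed

lemma rota_baxter_gps_cutoff:
  assumes "strictly_ordered_monoid TYPE('a::{comm_monoid_add, order})"
    and "A_set w = {}" "B_set w = {}"
  shows "rota_baxter_gps (cutoff w :: ('a \<Rightarrow> 'r::comm_ring_1) \<Rightarrow> 'a \<Rightarrow> 'r)"
  unfolding rota_baxter_gps_def
  by (simp add: cutoff_in_gps fun_eq_iff cutoff_rota_baxter_identity[OF assms(1) _ _ assms(2,3)])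
    (simp add: cutoff_def)

lemma cutoff_apply: "cutoff w f s = (if s < w then f s else 0)"
  by (simp add: cutoff_def)

definition monomial :: "'a \<Rightarrow> 'a \<Rightarrow> 'r::{zero, one}" where
  "monomial u = (\<lambda>s. if s = u then 1 else 0)"

lemma monomial_in_gps: "monomial u \<in> gps"
proof (rule finite_supp_in_gps)
  have "supp (monomial u) \<subseteq> {u}" by (auto simp: supp_def monomial_def)
  then show "finite (supp (monomial u))" by (rule finite_subset) simp
qed

text \<open>Valid also when 1 = 0 in R, both sides being 0 then.\<close>

lemma conv_restrict_monomial:
  "conv (\<lambda>x. if Q x then monomial u x else 0) (\<lambda>y. if R y then monomial v y else 0) (u + v)
     = (of_bool (Q u \<and> R v) :: 'r::comm_ring_1)"
proof (cases "(1::'r) = 0")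
  case True
  then have zero: "x = 0" for x :: 'r
    by (metis mult_1_right mult_zero_right)
  show ?thesis by (rule trans[OF zero zero[symmetric]])
next
  case False
  then have "conv_pairs (monomial u :: 'a \<Rightarrow> 'r) (monomial v) (u + v) = {(u, v)}"
    by (auto simp: conv_pairs_def monomial_def split: if_splits)
  moreover have "{(x, y) \<in> {(u, v)}. Q x \<and> R y} = (if Q u \<and> R v then {(u, v)} else {})"
    by auto
  ultimately show ?thesis by (simp add: conv_restrict monomial_def)
qed

lemma rota_baxter_gps_cutoff_monomials:
  assumes "rota_baxter_gps (cutoff w :: ('a::{comm_monoid_add, order} \<Rightarrow> 'r::comm_ring_1) \<Rightarrow> _)"
  shows "(of_bool (u < w \<and> v < w) :: 'r) =
    (if u + v < w then of_bool (v < w) + of_bool (u < w) - 1 else 0)"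
proof -
  let ?P = "cutoff w :: ('a \<Rightarrow> 'r) \<Rightarrow> 'a \<Rightarrow> 'r"
  have "\<forall>f \<in> gps. \<forall>g \<in> gps.
    conv (?P f) (?P g) = (\<lambda>s. ?P (conv f (?P g)) s + ?P (conv (?P f) g) s - ?P (conv f g) s)"
    using assms unfolding rota_baxter_gps_def by blast
  from fun_cong[OF this[rule_format, OF monomial_in_gps[of u] monomial_in_gps[of v]], of "u + v"]
  have "conv (?P (monomial u)) (?P (monomial v)) (u + v) =
    ?P (conv (monomial u) (?P (monomial v))) (u + v) + ?P (conv (?P (monomial u)) (monomial v)) (u + v)
    - ?P (conv (monomial u) (monomial v)) (u + v)"
    by simp
  moreover have "conv (?P (monomial u)) (?P (monomial v)) (u + v) = of_bool (u < w \<and> v < w)"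
    unfolding cutoff_def by (rule conv_restrict_monomial)
  moreover have "conv (monomial u) (?P (monomial v)) (u + v) = of_bool (v < w)"
    using conv_restrict_monomial[of "\<lambda>_. True" u "\<lambda>y. y < w" v] by (simp add: cutoff_def)
  moreover have "conv (?P (monomial u)) (monomial v) (u + v) = of_bool (u < w)"
    using conv_restrict_monomial[of "\<lambda>x. x < w" u "\<lambda>_. True" v] by (simp add: cutoff_def)
  moreover have "conv (monomial u) (monomial v) (u + v) = (1 :: 'r)"
    using conv_restrict_monomial[of "\<lambda>_. True" u "\<lambda>_. True" v] by simp
  ultimately show ?thesis
    unfolding cutoff_apply[of w _ "u + v"] by simp
qed

lemma rota_baxter_gps_cutoff_imp_empty:
  assumes "rota_baxter_gps (cutoff w :: ('a::{comm_monoid_add, order} \<Rightarrow> 'r::comm_ring_1) \<Rightarrow> _)"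
    and "(1::'r) \<noteq> 0"
  shows "A_set w = {} \<and> B_set w = {}"
proof -
  have "(u, v) \<notin> A_set w \<and> (u, v) \<notin> B_set w" for u v
    using rota_baxter_gps_cutoff_monomials[OF assms(1), of u v] assms(2)
    by (auto simp: A_set_def B_set_def split: if_splits)
  then show ?thesis by auto
qed

theorem proposition3p1:
  fixes w :: "'a::{comm_monoid_add, order}"
  assumes "strictly_ordered_monoid TYPE('a)"
    and "(1::'r::comm_ring_1) \<noteq> 0"
  shows "rota_baxter_gps (cutoff w :: ('a \<Rightarrow> 'r) \<Rightarrow> 'a \<Rightarrow> 'r)
         \<longleftrightarrow> A_set w = {} \<and> B_set w = {}"
  using rota_baxter_gps_cutoff_imp_empty[OF _ assms(2)] rota_baxter_gps_cutoff[OF assms(1)]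
  by blast

end
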